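(* Let $k \geq 2$ and let $G_k=(V_k,E_k)$ be the bipartite graph with vertex set $V_k=\{x,y\}\cup \{u_i,v_i \mid 1\leq i\leq 2k-2\}$ and edge set $E_k=\{\{x,y\}\}\cup\{\{x,u_{2j-1}\},\{x,v_{2j-1}\} \mid 1 \leq j\leq k-1\}$. Let $G$ be a graph that contains $G_k$ as an induced subgraph, and let $t$ be the minimum integer for which $G$ is a $t$-interval-PCG, i.e. $G=t\textnormal{-}PCG(T,I_1,\ldots, I_t)$ for some edge-weighted tree $T$ and disjoint intervals $I_1,\ldots,I_t$. For $1\leq i\leq 2k-2$, write $[u_i,v_i]$ for the vertex set $\{u_i, u_{i+1}, \ldots, u_{2k-2}, y, v_{2k-2}, v_{2k-3},\ldots, v_i\}$. If for each $i$, $1\leq i\leq 2k-2$, the path $P_T(u_i,v_i)$ is the longest path in $T_{[u_i,v_i]}$, then $t\geq k$.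
   Context: All trees are unrooted with edges weighted by nonnegative reals. For leaves $u,v$ of a tree $T$, $P_T(u,v)$ is the unique path between them and $d_T(u,v)$ the sum of its edge weights; for a set $L$ of leaves, $T_L$ is the minimal subtree of $T$ containing $L$. Given a tree $T$ and $k\ge1$ disjoint intervals $I_1,\ldots,I_k$ of nonnegative reals, $k\textnormal{-}PCG(T,I_1,\ldots,I_k)$ (a $k$-interval-PCG, or multi-interval PCG) is the graph whose vertex set is the leaf set of $T$ and in which $\{u,v\}$ is an edge iff $d_T(u,v)\in I_i$ for some $i$, $1\le i\le k$. *)

theory Defs
  imports Main Complex_Main
begin

definition is_path :: "'a set set \<Rightarrow> 'a list \<Rightarrow> bool" where
  "is_path E p \<longleftrightarrow> p \<noteq> [] \<and> distinct p \<and>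
     (\<forall>i. Suc i < length p \<longrightarrow> {p ! i, p ! Suc i} \<in> E)"

definition is_tree :: "'a set \<Rightarrow> 'a set set \<Rightarrow> bool" where
  "is_tree V E \<longleftrightarrow> finite V \<and> V \<noteq> {} \<and>
     (\<forall>e\<in>E. \<exists>u v. u \<noteq> v \<and> u \<in> V \<and> v \<in> V \<and> e = {u, v}) \<and>
     (\<forall>u\<in>V. \<forall>v\<in>V. \<exists>!p. is_path E p \<and> hd p = u \<and> last p = v)"

definition leaves :: "'a set \<Rightarrow> 'a set set \<Rightarrow> 'a set" where
  "leaves V E = {v \<in> V. card {e \<in> E. v \<in> e} = 1}"

definition path_weight :: "('a set \<Rightarrow> real) \<Rightarrow> 'a list \<Rightarrow> real" where
  "path_weight w p = (\<Sum>i\<leftarrow>[0..<length p - 1]. w {p ! i, p ! Suc i})"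

definition tpath :: "'a set set \<Rightarrow> 'a \<Rightarrow> 'a \<Rightarrow> 'a list" where
  "tpath E u v = (THE p. is_path E p \<and> hd p = u \<and> last p = v)"

definition tdist :: "'a set set \<Rightarrow> ('a set \<Rightarrow> real) \<Rightarrow> 'a \<Rightarrow> 'a \<Rightarrow> real" where
  "tdist E w u v = path_weight w (tpath E u v)"

text \<open>Vertex set of the minimal subtree T_L containing the leaf set L.\<close>
definition span_vertices :: "'a set set \<Rightarrow> 'a set \<Rightarrow> 'a set" where
  "span_vertices E L = (\<Union>a\<in>L. \<Union>b\<in>L. set (tpath E a b))"

definition valid_intervals :: "(nat \<Rightarrow> real set) \<Rightarrow> nat \<Rightarrow> bool" where
  "valid_intervals I t \<longleftrightarrow>
     (\<forall>i<t. I i \<noteq> {} \<and> I i \<subseteq> {0..} \<and>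
        (\<forall>a\<in>I i. \<forall>c\<in>I i. \<forall>b. a \<le> b \<and> b \<le> c \<longrightarrow> b \<in> I i)) \<and>
     (\<forall>i<t. \<forall>j<t. i \<noteq> j \<longrightarrow> I i \<inter> I j = {})"

definition pcg_edges :: "'a set \<Rightarrow> 'a set set \<Rightarrow> ('a set \<Rightarrow> real) \<Rightarrow> (nat \<Rightarrow> real set) \<Rightarrow> nat \<Rightarrow> 'a set set" where
  "pcg_edges V E w I t = {{u, v} | u v. u \<in> leaves V E \<and> v \<in> leaves V E \<and> u \<noteq> v \<and>
       (\<exists>i<t. tdist E w u v \<in> I i)}"

definition is_multi_PCG_rep :: "'a set \<Rightarrow> 'a set set \<Rightarrow> nat \<Rightarrow> 'a set \<Rightarrow> 'a set set \<Rightarrow> ('a set \<Rightarrow> real) \<Rightarrow> (nat \<Rightarrow> real set) \<Rightarrow> bool" where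
  "is_multi_PCG_rep VG EG t V E w I \<longleftrightarrow> t \<ge> 1 \<and> is_tree V E \<and> (\<forall>e\<in>E. w e \<ge> 0) \<and>
     valid_intervals I t \<and> VG = leaves V E \<and> EG = pcg_edges V E w I t"

definition is_multi_PCG :: "'a set \<Rightarrow> 'a set set \<Rightarrow> nat \<Rightarrow> bool" where
  "is_multi_PCG VG EG t \<longleftrightarrow> (\<exists>V E w I. is_multi_PCG_rep VG EG t V E w I)"

datatype gk_vertex = X | Y | U nat | W nat  \<comment> \<open>W i stands for v_i\<close>

definition Gk_verts :: "nat \<Rightarrow> gk_vertex set" where
  "Gk_verts k = {X, Y} \<union> U ` {1..2*k-2} \<union> W ` {1..2*k-2}"

definition Gk_edges :: "nat \<Rightarrow> gk_vertex set set" where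
  "Gk_edges k = {{X, Y}} \<union> {{X, U (2*j-1)} | j. 1 \<le> j \<and> j \<le> k-1}
                         \<union> {{X, W (2*j-1)} | j. 1 \<le> j \<and> j \<le> k-1}"

definition induced_embedding :: "nat \<Rightarrow> 'a set \<Rightarrow> 'a set set \<Rightarrow> (gk_vertex \<Rightarrow> 'a) \<Rightarrow> bool" where
  "induced_embedding k VG EG f \<longleftrightarrow> inj_on f (Gk_verts k) \<and> f ` Gk_verts k \<subseteq> VG \<and>
     (\<forall>a\<in>Gk_verts k. \<forall>b\<in>Gk_verts k. ({f a, f b} \<in> EG \<longleftrightarrow> {a, b} \<in> Gk_edges k))"

definition seg :: "nat \<Rightarrow> nat \<Rightarrow> gk_vertex set" where
  "seg k i = {Y} \<union> U ` {i..2*k-2} \<union> W ` {i..2*k-2}"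

end

(* If u and v are the ends of a longest path in the subtree spanned by a leaf set L, then
   d(x,s) <= max (d(x,u)) (d(x,v)) for every vertex x and every s in L: project x and s onto
   the path from u to v and compare. Since the sets [u_i,v_i] are nested, the values
   M_i = max (d(x,u_i)) (d(x,v_i)) are therefore nonincreasing in i and bounded below by d(x,y).
   The adjacencies of x in G_k put M_i into the union of the intervals exactly for odd i, and
   d(x,y) into it as well. An interval containing two of the k values M_1, M_3, ..., M_(2k-3),
   d(x,y) would contain the even-indexed value between them, so these k values lie in
   pairwise different intervals. *)

theory Submission
  imports Defs "HOL-Library.Sublist"
begin

lemma is_path_iff_successively:
  "is_path E p \<longleftrightarrow> p \<noteq> [] \<and> distinct p \<and> successively (\<lambda>a b. {a, b} \<in> E) p"
  unfolding is_path_def successively_conv_nth by blast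

lemma is_path_rev [simp]: "is_path E (rev p) \<longleftrightarrow> is_path E p"
proof -
  have sym: "(\<lambda>a b. {b, a} \<in> E) = (\<lambda>a b. {a, b} \<in> E)"
    by (simp add: insert_commute)
  show ?thesis
    unfolding is_path_iff_successively successively_rev sym by simp
qed

lemma is_path_appendD:
  assumes "is_path E (xs @ ys)"
  shows "xs \<noteq> [] \<Longrightarrow> is_path E xs" and "ys \<noteq> [] \<Longrightarrow> is_path E ys"
  using assms by (auto simp: is_path_iff_successively successively_append_iff)

lemma is_path_join:
  assumes "is_path E (m # xs)" and "is_path E (m # ys)" and "set xs \<inter> set ys = {}"
  shows "is_path E (rev xs @ m # ys)"
proof -
  have "is_path E (rev xs @ [m])"
    using assms(1) is_path_rev[of E "m # xs"] by simp
  then show ?thesis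
    using assms by (auto simp: is_path_iff_successively successively_append_iff)
qed

lemma path_weight_Nil [simp]: "path_weight w [] = 0"
  and path_weight_singleton [simp]: "path_weight w [a] = 0"
  by (simp_all add: path_weight_def)

lemma path_weight_Cons_Cons [simp]:
  "path_weight w (a # b # xs) = w {a, b} + path_weight w (b # xs)"
proof -
  have "[0..<Suc (length xs)] = 0 # map Suc [0..<length xs]"
    by (metis map_Suc_upt upt_conv_Cons zero_less_Suc)
  then show ?thesis
    by (simp add: path_weight_def comp_def)
qed

lemma path_weight_append:
  "path_weight w (xs @ m # ys) = path_weight w (xs @ [m]) + path_weight w (m # ys)"
  by (induction xs rule: induct_list012) auto

lemma path_weight_rev [simp]: "path_weight w (rev p) = path_weight w p"
proof (induction p rule: induct_list012)
  case (3 a b xs)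
  then show ?case
    using path_weight_append[of w "rev xs" b "[a]"] by (simp add: insert_commute)
qed auto

lemma path_weight_nonneg:
  assumes "\<And>e. e \<in> E \<Longrightarrow> 0 \<le> w e" and "successively (\<lambda>a b. {a, b} \<in> E) p"
  shows "0 \<le> path_weight w p"
  using assms(2) by (induction p rule: induct_list012) (auto intro!: add_nonneg_nonneg assms(1))

lemma longest_common_prefix_split:
  "\<exists>xs' ys'. xs = longest_common_prefix xs ys @ xs' \<and> ys = longest_common_prefix xs ys @ ys' \<and>
     (xs' \<noteq> [] \<longrightarrow> ys' \<noteq> [] \<longrightarrow> hd xs' \<noteq> hd ys')"
  by (induction xs ys rule: longest_common_prefix.induct) auto

locale tree =
  fixes V :: "'a set" and E :: "'a set set"
  assumes is_tree: "is_tree V E"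
begin

lemma ex1_path:
  assumes "u \<in> V" and "v \<in> V"
  shows "\<exists>!p. is_path E p \<and> hd p = u \<and> last p = v"
proof -
  have "\<forall>u\<in>V. \<forall>v\<in>V. \<exists>!p. is_path E p \<and> hd p = u \<and> last p = v"
    using is_tree unfolding is_tree_def by (elim conjE)
  then show ?thesis
    using assms by blast
qed

lemma set_path_subset:
  assumes "is_path E p" and "hd p \<in> V"
  shows "set p \<subseteq> V"
proof -
  have "b \<in> V" if "{a, b} \<in> E" for a b
    using is_tree that unfolding is_tree_def by (metis doubleton_eq_iff)
  moreover have "successively (\<lambda>a b. {a, b} \<in> E) p"
    using assms(1) by (simp add: is_path_iff_successively)
  ultimately show ?thesis
    using assms(2) by (induction p rule: induct_list012) auto
qed

lemma tpath_spec:
  assumes "u \<in> V" and "v \<in> V"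
  shows "is_path E (tpath E u v)" and "hd (tpath E u v) = u" and "last (tpath E u v) = v"
  using theI'[OF ex1_path[OF assms]] unfolding tpath_def by auto

lemma tpath_eqI:
  assumes "u \<in> V" and "is_path E p" and "hd p = u" and "last p = v"
  shows "tpath E u v = p"
proof -
  have "v \<in> V"
    using set_path_subset assms by (metis is_path_def last_in_set subsetD)
  then show ?thesis
    unfolding tpath_def using ex1_path assms by (intro the1_equality) auto
qed

lemma set_tpath_subset: "u \<in> V \<Longrightarrow> v \<in> V \<Longrightarrow> set (tpath E u v) \<subseteq> V"
  using set_path_subset tpath_spec by metis

lemma tpath_swap: "u \<in> V \<Longrightarrow> v \<in> V \<Longrightarrow> tpath E v u = rev (tpath E u v)"
  using tpath_spec[of u v] by (intro tpath_eqI) (auto simp: hd_rev last_rev)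

lemma tdist_commute: "u \<in> V \<Longrightarrow> v \<in> V \<Longrightarrow> tdist E w v u = tdist E w u v"
  unfolding tdist_def by (subst tpath_swap) simp_all

lemma tpath_split:
  assumes "u \<in> V" and "v \<in> V" and "tpath E u v = xs @ m # ys"
  shows "tpath E u m = xs @ [m]" and "tpath E m v = m # ys"
proof -
  have p: "is_path E (xs @ m # ys)" and "hd (xs @ m # ys) = u" and "last (m # ys) = v"
    using tpath_spec[OF assms(1,2)] assms(3) by auto
  moreover have "m \<in> V"
    using set_tpath_subset[OF assms(1,2)] assms(3) by auto
  moreover have "is_path E (xs @ [m])" and "is_path E (m # ys)"
    using is_path_appendD[of E "xs @ [m]" ys] is_path_appendD[of E xs "m # ys"] p by simp_all
  ultimately show "tpath E u m = xs @ [m]" and "tpath E m v = m # ys"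
    using assms(1) by (auto intro!: tpath_eqI simp: hd_append)
qed

lemma tdist_split:
  assumes "u \<in> V" and "v \<in> V" and "m \<in> set (tpath E u v)"
  shows "tdist E w u v = tdist E w u m + tdist E w m v"
proof -
  obtain xs ys where split: "tpath E u v = xs @ m # ys"
    using assms(3) split_list by metis
  show ?thesis
    unfolding tdist_def tpath_split[OF assms(1,2) split] split by (rule path_weight_append)
qed

lemma set_tpath_split:
  assumes "u \<in> V" and "v \<in> V" and "c \<in> set (tpath E u v)"
  shows "set (tpath E u v) = set (tpath E u c) \<union> set (tpath E c v)"
proof -
  obtain xs ys where split: "tpath E u v = xs @ c # ys"
    using assms(3) split_list by metis
  show ?thesis
    unfolding tpath_split[OF assms(1,2) split] split by auto
qed

lemma tpath_median:
  assumes "a \<in> V" and "b \<in> V" and "c \<in> V"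
  obtains m where "m \<in> set (tpath E a b)" and "m \<in> set (tpath E c a)" and "m \<in> set (tpath E c b)"
proof -
  \<comment> \<open>m is the last common vertex of the paths from c to a and from c to b; their remainders
    beyond m are disjoint and glue to the path from a to b.\<close>
  define pre where "pre = longest_common_prefix (tpath E c a) (tpath E c b)"
  obtain p q where ca: "tpath E c a = pre @ p" and cb: "tpath E c b = pre @ q"
    and diverge: "p \<noteq> [] \<Longrightarrow> q \<noteq> [] \<Longrightarrow> hd p \<noteq> hd q"
    unfolding pre_def using longest_common_prefix_split by blast
  have "pre \<noteq> []"
    using ca cb diverge tpath_spec[OF assms(3,1)] tpath_spec[OF assms(3,2)] by (auto simp: is_path_def)
  then obtain pre' m where "pre = pre' @ [m]"
    by (metis rev_exhaust)
  then have ca': "tpath E c a = pre' @ m # p" and cb': "tpath E c b = pre' @ m # q"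
    using ca cb by simp_all
  have "set p \<inter> set q = {}"
  proof (rule ccontr)
    assume "set p \<inter> set q \<noteq> {}"
    then obtain z p1 p2 q1 q2 where p: "p = p1 @ z # p2" and q: "q = q1 @ z # q2"
      by (metis disjoint_iff split_list)
    have "tpath E c z = (pre' @ m # p1) @ [z]" and "tpath E c z = (pre' @ m # q1) @ [z]"
      using tpath_split(1)[OF assms(3,1), of "pre' @ m # p1"] tpath_split(1)[OF assms(3,2), of "pre' @ m # q1"]
        ca' cb' p q by simp_all
    then have "p1 = q1"
      by simp
    then show False
      using diverge p q by (cases p1) auto
  qed
  moreover have "m \<in> V"
    using ca' set_tpath_subset[OF assms(3,1)] by auto
  then have "is_path E (m # p)" and "last (m # p) = a" and "is_path E (m # q)" and "last (m # q) = b"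
    using tpath_spec[of m a] tpath_spec[of m b] assms(1,2)
    unfolding tpath_split(2)[OF assms(3,1) ca'] tpath_split(2)[OF assms(3,2) cb'] by simp_all
  moreover from this have "hd (rev p @ m # q) = a"
    by (cases p rule: rev_cases) auto
  ultimately have "tpath E a b = rev p @ m # q"
    using assms(1) is_path_join by (intro tpath_eqI) simp_all
  then show ?thesis
    using that[of m] ca' cb' by simp
qed

end

locale weighted_tree = tree +
  fixes w :: "'a set \<Rightarrow> real"
  assumes weight_nonneg: "e \<in> E \<Longrightarrow> 0 \<le> w e"
begin

lemma tdist_nonneg:
  assumes "u \<in> V" and "v \<in> V"
  shows "0 \<le> tdist E w u v"
proof -
  have "successively (\<lambda>a b. {a, b} \<in> E) (tpath E u v)"
    using tpath_spec(1)[OF assms] by (simp add: is_path_iff_successively)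
  then show ?thesis
    unfolding tdist_def using path_weight_nonneg weight_nonneg by blast
qed

lemma tdist_triangle:
  assumes "a \<in> V" and "b \<in> V" and "c \<in> V"
  shows "tdist E w a b \<le> tdist E w a c + tdist E w c b"
proof -
  obtain m where m: "m \<in> set (tpath E a b)" "m \<in> set (tpath E c a)" "m \<in> set (tpath E c b)"
    using tpath_median[OF assms] .
  have "m \<in> V"
    using m(1) set_tpath_subset[OF assms(1,2)] by blast
  then show ?thesis
    using tdist_split[OF assms(1,2) m(1), of w] tdist_split[OF assms(3,1) m(2), of w]
      tdist_split[OF assms(3,2) m(3), of w] tdist_nonneg[of c m]
      tdist_commute[of a m w] tdist_commute[of a c w] assms by linarith
qed

lemma tdist_le_max_diametral:
  assumes "u \<in> V" and "v \<in> V" and "s \<in> V" and "x \<in> V"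
    and us: "tdist E w u s \<le> tdist E w u v" and vs: "tdist E w v s \<le> tdist E w u v"
  shows "tdist E w x s \<le> max (tdist E w x u) (tdist E w x v)"
proof -
  let ?d = "tdist E w"
  \<comment> \<open>c and c' are the projections of x and s onto the path from u to v.\<close>
  obtain c where c: "c \<in> set (tpath E u v)" "c \<in> set (tpath E x u)" "c \<in> set (tpath E x v)"
    using tpath_median[OF assms(1,2,4)] .
  obtain c' where c': "c' \<in> set (tpath E u v)" "c' \<in> set (tpath E s u)" "c' \<in> set (tpath E s v)"
    using tpath_median[OF assms(1,2,3)] .
  have cV: "c \<in> V" and c'V: "c' \<in> V"
    using c(1) c'(1) set_tpath_subset[OF assms(1,2)] by auto
  have detour: "?d x s \<le> ?d x c + ?d c c' + ?d c' s"
    using tdist_triangle[OF assms(4,3) cV] tdist_triangle[OF cV assms(3) c'V] by linarith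
  have xu: "?d x u = ?d x c + ?d c u" and xv: "?d x v = ?d x c + ?d c v"
    using tdist_split[OF assms(4,1) c(2)] tdist_split[OF assms(4,2) c(3)] .
  have su: "?d s u = ?d s c' + ?d c' u" and sv: "?d s v = ?d s c' + ?d c' v"
    using tdist_split[OF assms(3,1) c'(2)] tdist_split[OF assms(3,2) c'(3)] .
  have uv: "?d u v = ?d u c' + ?d c' v"
    using tdist_split[OF assms(1,2) c'(1)] .
  have sym: "?d s u = ?d u s" "?d s v = ?d v s" "?d s c' = ?d c' s" "?d c' u = ?d u c'"
    "?d c u = ?d u c" "?d c' c = ?d c c'"
    using tdist_commute assms cV c'V by auto
  have "c' \<in> set (tpath E c v) \<or> c' \<in> set (tpath E u c)"
    using set_tpath_split[OF assms(1,2) c(1)] c'(1) by auto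
  then show ?thesis
  proof
    assume "c' \<in> set (tpath E c v)"
    then have "?d c v = ?d c c' + ?d c' v"
      using tdist_split[OF cV assms(2)] by blast
    then have "?d x s \<le> ?d x v"
      using detour xv su uv sym us by linarith
    then show ?thesis
      by simp
  next
    assume "c' \<in> set (tpath E u c)"
    then have "?d u c = ?d u c' + ?d c' c"
      using tdist_split[OF assms(1) cV] by blast
    then have "?d x s \<le> ?d x u"
      using detour xu sv uv sym vs by linarith
    then show ?thesis
      by simp
  qed
qed

lemma tdist_le_max_longest_path:
  assumes "L \<subseteq> V" and "u \<in> L" and "v \<in> L" and "s \<in> L" and "x \<in> V"
    and longest: "\<And>p. is_path E p \<Longrightarrow> set p \<subseteq> span_vertices E L \<Longrightarrow>
                       path_weight w p \<le> path_weight w (tpath E u v)"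
  shows "tdist E w x s \<le> max (tdist E w x u) (tdist E w x v)"
proof -
  have "tdist E w a s \<le> tdist E w u v" if "a \<in> L" for a
  proof -
    have "set (tpath E a s) \<subseteq> span_vertices E L"
      unfolding span_vertices_def using that assms(4) by blast
    then show ?thesis
      unfolding tdist_def using longest tpath_spec(1) that assms(1,4) by blast
  qed
  then show ?thesis
    using tdist_le_max_diametral assms by blast
qed

end

lemma alternating_antimono_seq_intervals:
  fixes m :: "nat \<Rightarrow> real" and J :: "nat \<Rightarrow> real set"
  assumes convex: "\<And>i a b c. i < t \<Longrightarrow> a \<in> J i \<Longrightarrow> c \<in> J i \<Longrightarrow> a \<le> b \<Longrightarrow> b \<le> c \<Longrightarrow> b \<in> J i"
    and antimono: "\<And>i. i < 2 * n \<Longrightarrow> m (Suc i) \<le> m i"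
    and alternating: "\<And>i. i \<le> 2 * n \<Longrightarrow> (\<exists>j<t. m i \<in> J j) \<longleftrightarrow> even i"
  shows "n < t"
proof -
  have dec: "m j \<le> m i" if "i \<le> j" and "j \<le> 2 * n" for i j
    by (rule lift_Suc_antimono_le_ivl[of "{..<2 * n}"]) (use antimono that in auto)
  have "\<forall>l. \<exists>j. l \<le> n \<longrightarrow> j < t \<and> m (2 * l) \<in> J j"
    using alternating by simp
  then obtain g where g: "\<And>l. l \<le> n \<Longrightarrow> g l < t \<and> m (2 * l) \<in> J (g l)"
    by metis
  have "inj_on g {..n}"
  proof (rule linorder_inj_onI')
    fix l l' assume "l \<in> {..n}" and "l' \<in> {..n}" and "l < l'"
    then have "m (2 * l') \<le> m (Suc (2 * l))" and "m (Suc (2 * l)) \<le> m (2 * l)"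
      using dec by simp_all
    then have "g l = g l' \<Longrightarrow> m (Suc (2 * l)) \<in> J (g l)"
      using convex g \<open>l \<in> {..n}\<close> \<open>l' \<in> {..n}\<close> by (metis atMost_iff)
    then show "g l \<noteq> g l'"
      using alternating[of "Suc (2 * l)"] g \<open>l < l'\<close> \<open>l' \<in> {..n}\<close> by auto
  qed
  then have "card {..n} \<le> card {..<t}"
    using g by (intro card_inj_on_le) auto
  then show ?thesis
    by simp
qed

lemma alternating_antimono_seq_bottom_intervals:
  fixes M :: "nat \<Rightarrow> real" and J :: "nat \<Rightarrow> real set"
  assumes convex: "\<And>i a b c. i < t \<Longrightarrow> a \<in> J i \<Longrightarrow> c \<in> J i \<Longrightarrow> a \<le> b \<Longrightarrow> b \<le> c \<Longrightarrow> b \<in> J i"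
    and antimono: "\<And>i. 1 \<le> i \<Longrightarrow> i < 2 * n \<Longrightarrow> M (Suc i) \<le> M i"
    and bottom: "0 < n \<Longrightarrow> y \<le> M (2 * n)"
    and alternating: "\<And>i. 1 \<le> i \<Longrightarrow> i \<le> 2 * n \<Longrightarrow> (\<exists>j<t. M i \<in> J j) \<longleftrightarrow> odd i"
    and bottom_in: "\<exists>j<t. y \<in> J j"
  shows "n < t"
proof (rule alternating_antimono_seq_intervals[where m = "\<lambda>i. if i < 2 * n then M (Suc i) else y"])
  show "b \<in> J i" if "i < t" "a \<in> J i" "c \<in> J i" "a \<le> b" "b \<le> c" for i a b c
    using convex that .
  show "(if Suc i < 2 * n then M (Suc (Suc i)) else y) \<le> (if i < 2 * n then M (Suc i) else y)"
    if "i < 2 * n" for i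
  proof -
    have "Suc i < 2 * n \<or> Suc i = 2 * n"
      using that by linarith
    then show ?thesis
      using antimono[of "Suc i"] bottom that by auto
  qed
  show "(\<exists>j<t. (if i < 2 * n then M (Suc i) else y) \<in> J j) \<longleftrightarrow> even i" if "i \<le> 2 * n" for i
    using alternating[of "Suc i"] bottom_in that by (cases "i < 2 * n") auto
qed

lemma pcg_edge_iff:
  assumes "is_multi_PCG_rep VG EG t V E w I" and "u \<in> VG" and "v \<in> VG" and "u \<noteq> v"
  shows "{u, v} \<in> EG \<longleftrightarrow> (\<exists>i<t. tdist E w u v \<in> I i)"
proof -
  have tree: "tree V E" and VG: "VG = leaves V E" and EG: "EG = pcg_edges V E w I t"
    using assms(1) unfolding is_multi_PCG_rep_def tree_def by simp_all
  have "u \<in> V" and "v \<in> V"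
    using assms(2,3) unfolding VG leaves_def by simp_all
  then have "tdist E w v u = tdist E w u v"
    by (rule tree.tdist_commute[OF tree])
  then show ?thesis
    unfolding EG pcg_edges_def using assms(2-4) VG by (auto simp: doubleton_eq_iff)
qed

lemma Gk_edge_XY: "{X, Y} \<in> Gk_edges k"
  by (simp add: Gk_edges_def)

lemma Gk_edge_X_iff:
  assumes "i \<in> {1..2*k-2}"
  shows "{X, U i} \<in> Gk_edges k \<longleftrightarrow> odd i" and "{X, W i} \<in> Gk_edges k \<longleftrightarrow> odd i"
proof -
  have "(\<exists>j. 1 \<le> j \<and> j \<le> k - 1 \<and> i = 2 * j - 1) \<longleftrightarrow> odd i"
    using assms by (auto elim!: oddE intro: exI[of _ "Suc (i div 2)"])
  then show "{X, U i} \<in> Gk_edges k \<longleftrightarrow> odd i" and "{X, W i} \<in> Gk_edges k \<longleftrightarrow> odd i"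
    unfolding Gk_edges_def by (auto simp: doubleton_eq_iff)
qed

lemma Gk_pcg_edge_X_iff:
  assumes "induced_embedding k VG EG f" and "is_multi_PCG_rep VG EG t V E w I"
    and "a \<in> Gk_verts k" and "a \<noteq> X"
  shows "(\<exists>i<t. tdist E w (f X) (f a) \<in> I i) \<longleftrightarrow> {X, a} \<in> Gk_edges k"
proof -
  have X: "X \<in> Gk_verts k"
    by (simp add: Gk_verts_def)
  then have "f X \<in> VG" and "f a \<in> VG" and "f X \<noteq> f a"
    using assms(1,3,4) unfolding induced_embedding_def inj_on_def by auto
  then have "{f X, f a} \<in> EG \<longleftrightarrow> (\<exists>i<t. tdist E w (f X) (f a) \<in> I i)"
    by (rule pcg_edge_iff[OF assms(2)])
  moreover have "{f X, f a} \<in> EG \<longleftrightarrow> {X, a} \<in> Gk_edges k"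
    using assms(1,3) X unfolding induced_embedding_def by blast
  ultimately show ?thesis
    by simp
qed

lemma Gk_pcg_max_dist_iff:
  assumes "induced_embedding k VG EG f" and "is_multi_PCG_rep VG EG t V E w I"
    and "i \<in> {1..2*k-2}"
  shows "(\<exists>j<t. max (tdist E w (f X) (f (U i))) (tdist E w (f X) (f (W i))) \<in> I j) \<longleftrightarrow> odd i"
proof -
  have "U i \<in> Gk_verts k" and "W i \<in> Gk_verts k"
    using assms(3) by (auto simp: Gk_verts_def)
  then have "(\<exists>j<t. tdist E w (f X) (f (U i)) \<in> I j) \<longleftrightarrow> odd i"
    and "(\<exists>j<t. tdist E w (f X) (f (W i)) \<in> I j) \<longleftrightarrow> odd i"
    using Gk_pcg_edge_X_iff[OF assms(1,2)] Gk_edge_X_iff[OF assms(3)] by auto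
  then show ?thesis
    by (simp add: max_def)
qed

theorem lemma2:
  fixes k t :: nat and VG :: "'a set" and EG :: "'a set set"
    and V :: "'a set" and E :: "'a set set" and w :: "'a set \<Rightarrow> real"
    and I :: "nat \<Rightarrow> real set" and f :: "gk_vertex \<Rightarrow> 'a"
  assumes "k \<ge> 2"
    and "induced_embedding k VG EG f"
    and "is_multi_PCG_rep VG EG t V E w I"
    and "\<forall>t'. is_multi_PCG VG EG t' \<longrightarrow> t \<le> t'"
    and "\<forall>i\<in>{1..2*k-2}. \<forall>p. is_path E p \<and> set p \<subseteq> span_vertices E (f ` seg k i)
            \<longrightarrow> path_weight w p \<le> path_weight w (tpath E (f (U i)) (f (W i)))"
  shows "t \<ge> k"
proof -
  have rep: "is_tree V E" "\<forall>e\<in>E. 0 \<le> w e" "valid_intervals I t" "VG = leaves V E"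
    using assms(3) unfolding is_multi_PCG_rep_def by simp_all
  interpret weighted_tree V E w
    using rep by unfold_locales auto
  have fV: "f a \<in> V" if "a \<in> Gk_verts k" for a
    using assms(2) rep(4) that unfolding induced_embedding_def leaves_def by auto
  define D where "D a = tdist E w (f X) (f a)" for a
  define M where "M i = max (D (U i)) (D (W i))" for i
  have D_le_M: "D s \<le> M i" if "i \<in> {1..2*k-2}" and "s \<in> seg k i" for i s
  proof -
    have "seg k i \<subseteq> Gk_verts k" and "U i \<in> seg k i" and "W i \<in> seg k i" and "X \<in> Gk_verts k"
      using that unfolding seg_def Gk_verts_def by auto
    then show ?thesis
      unfolding D_def M_def using assms(5) that fV
      by (intro tdist_le_max_longest_path[of "f ` seg k i"]) auto
  qed
  have "k - 1 < t"
  proof (rule alternating_antimono_seq_bottom_intervals[where M = M and y = "D Y"])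
    show "b \<in> I i" if "i < t" "a \<in> I i" "c \<in> I i" "a \<le> b" "b \<le> c" for i a b c
      using rep(3) that unfolding valid_intervals_def by blast
    show "M (Suc i) \<le> M i" if "1 \<le> i" and "i < 2 * (k - 1)" for i
      using D_le_M[of i "U (Suc i)"] D_le_M[of i "W (Suc i)"] that unfolding M_def seg_def by auto
    show "D Y \<le> M (2 * (k - 1))"
      using assms(1) by (intro D_le_M) (auto simp: seg_def)
    show "(\<exists>j<t. M i \<in> I j) \<longleftrightarrow> odd i" if "1 \<le> i" and "i \<le> 2 * (k - 1)" for i
      using Gk_pcg_max_dist_iff[OF assms(2,3)] that unfolding M_def D_def by auto
    show "\<exists>j<t. D Y \<in> I j"
      using Gk_pcg_edge_X_iff[OF assms(2,3), of Y] Gk_edge_XY unfolding D_def Gk_verts_def by auto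
  qed
  then show ?thesis
    by simp
qed

end
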